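(* Let $n$ be a positive integer and let $\alpha,\beta,\gamma,\delta: \mathcal{P}(n) \to [0,\infty)$ satisfy \[ \alpha(A)\beta(B) \leq \gamma(A \cup B)\,\delta(A \cap B) \quad \text{for all } A,B \in \mathcal{P}(n). \] Then \[ \Big(\sum_{A \in \mathcal{P}(n)} \alpha(A)q^{|A|}\Big)\Big( \sum_{B \in \mathcal{P}(n)} \beta(B)q^{|B|}\Big) \ll \Big(\sum_{C \in \mathcal{P}(n)} \gamma(C)q^{|C|}\Big)\Big( \sum_{D \in \mathcal{P}(n)} \delta(D)q^{|D|}\Big). \] Equivalently, for every integer $k \ge 0$, \[ \sum_{|A|+|B|=k}\alpha(A)\beta(B) \le \sum_{|C|+|D|=k}\gamma(C)\delta(D), \] where the sums range over pairs of subsets of $[n]$.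
   Context: $[n]=\{1,\dots,n\}$ and $\mathcal{P}(n)$ denotes the power set of $[n]$. For real polynomials $P(q),R(q)$, $P(q) \ll R(q)$ means that every coefficient of $R(q)-P(q)$ is a non-negative real number. *)

theory Defs
  imports Complex_Main "HOL-Computational_Algebra.Polynomial"
begin

definition set_gen_poly :: "nat \<Rightarrow> (nat set \<Rightarrow> real) \<Rightarrow> real poly" where
  "set_gen_poly n f = (\<Sum>A\<in>Pow {1..n}. monom (f A) (card A))"

definition coeff_le :: "real poly \<Rightarrow> real poly \<Rightarrow> bool" (infix "\<lless>" 50) where
  "P \<lless> R \<longleftrightarrow> (\<forall>i. coeff (R - P) i \<ge> 0)"

end

theory Submission
  imports Defs
begin

(* Write A,B for subsets of a finite ground set N.  The k-th coefficient of
   (sum_A alpha A q^|A|)(sum_B beta B q^|B|) is the sum of alpha A * beta B over the pairs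
   with |A| + |B| = k.  Since |A| + |B| = |A u B| + |A n B|, this set of pairs is a union of
   "fibres" F(S,T) = {(A,B). A u B = S, A n B = T}, so it suffices to compare the two sides
   fibre by fibre.
   The fibre F(S,T) (T <= S) is parametrised by U <= M = S - T via (A,B) = (T u U, S - U).
   With p U = alpha (T u U) * beta (S - U) and r U = gamma (T u U) * delta (S - U), the
   hypothesis gives p U * p (M - W) <= r (U u W) * r (M - (U n W)), so the four functions
   theorem of Ahlswede and Daykin on Pow M, together with the complement symmetry
   U <-> M - U of sums over Pow M, yields (sum p)^2 <= (sum r)^2, i.e. sum p <= sum r. *)

section \<open>The four functions theorem\<close>

text \<open>The four functions theorem on a one-point ground set: the values of the four
  functions on the empty set and on the point are a0, a1 etc.\<close>
lemma four_numbers: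
  fixes a0 a1 b0 b1 c0 c1 d0 d1 :: real
  assumes nonneg: "a0 \<ge> 0" "a1 \<ge> 0" "b0 \<ge> 0" "b1 \<ge> 0" "c0 \<ge> 0" "c1 \<ge> 0" "d0 \<ge> 0" "d1 \<ge> 0"
    and h00: "a0 * b0 \<le> c0 * d0" and h01: "a0 * b1 \<le> c1 * d0"
    and h10: "a1 * b0 \<le> c1 * d0" and h11: "a1 * b1 \<le> c1 * d1"
  shows "(a0 + a1) * (b0 + b1) \<le> (c0 + c1) * (d0 + d1)"
proof -
  define X where "X = c1 * d0"
  define p where "p = a0 * b1"
  define r where "r = a1 * b0"
  have cross: "p + r \<le> c0 * d1 + X"
  proof (cases "X = 0")
    case True
    moreover have "p \<le> X" "r \<le> X" using h01 h10 by (simp_all add: p_def r_def X_def)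
    moreover have "c0 * d1 \<ge> 0" using nonneg by simp
    ultimately show ?thesis by linarith
  next
    case False
    then have X_pos: "X > 0" using nonneg by (simp add: X_def)
    have "p * r = (a0 * b0) * (a1 * b1)" by (simp add: p_def r_def algebra_simps)
    also have "\<dots> \<le> (c0 * d0) * (c1 * d1)"
      by (rule mult_mono[OF h00 h11]) (use nonneg in auto)
    also have "\<dots> = (c0 * d1) * X" by (simp add: X_def algebra_simps)
    finally have pr: "p * r \<le> (c0 * d1) * X" .
    have "0 \<le> (X - p) * (X - r)" using h01 h10 by (simp add: p_def r_def X_def)
    also have "\<dots> \<le> X * (c0 * d1 + X - p - r)" using pr by (simp add: algebra_simps)
    finally have "0 \<le> c0 * d1 + X - p - r" using X_pos by (simp add: zero_le_mult_iff)
    then show ?thesis by simp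
  qed
  have "(a0 + a1) * (b0 + b1) = a0 * b0 + (p + r) + a1 * b1"
    by (simp add: p_def r_def algebra_simps)
  also have "\<dots> \<le> c0 * d0 + (c0 * d1 + X) + c1 * d1" using h00 h11 cross by linarith
  also have "\<dots> = (c0 + c1) * (d0 + d1)" by (simp add: X_def algebra_simps)
  finally show ?thesis .
qed

definition marginal :: "'a \<Rightarrow> ('a set \<Rightarrow> real) \<Rightarrow> 'a set \<Rightarrow> real" where
  "marginal x f A = f A + f (insert x A)"

lemma sum_Pow_insert_marginal:
  assumes "finite M" "x \<notin> M"
  shows "(\<Sum>A\<in>Pow (insert x M). f A) = (\<Sum>A\<in>Pow M. marginal x f A)"
proof -
  have inj: "inj_on (insert x) (Pow M)"
    using assms(2) by (auto simp: inj_on_def)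
  have "(\<Sum>A\<in>Pow (insert x M). f A) = (\<Sum>A\<in>Pow M. f A) + (\<Sum>A\<in>insert x ` Pow M. f A)"
    unfolding Pow_insert by (rule sum.union_disjoint) (use assms in auto)
  also have "(\<Sum>A\<in>insert x ` Pow M. f A) = (\<Sum>A\<in>Pow M. f (insert x A))"
    by (simp add: sum.reindex[OF inj])
  finally show ?thesis by (simp add: marginal_def sum.distrib)
qed

text \<open>The four functions condition is inherited by the marginals: for fixed A and B this
  is the one-point case applied to the values at A, insert x A, B, insert x B.\<close>
lemma marginal_four_functions_condition:
  fixes a b c d :: "'a set \<Rightarrow> real"
  assumes x: "x \<notin> M" and A: "A \<subseteq> M" and B: "B \<subseteq> M"
    and nonneg: "\<And>C. C \<subseteq> insert x M \<Longrightarrow> a C \<ge> 0 \<and> b C \<ge> 0 \<and> c C \<ge> 0 \<and> d C \<ge> 0"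
    and hyp: "\<And>C D. C \<subseteq> insert x M \<Longrightarrow> D \<subseteq> insert x M \<Longrightarrow> a C * b D \<le> c (C \<union> D) * d (C \<inter> D)"
  shows "marginal x a A * marginal x b B \<le> marginal x c (A \<union> B) * marginal x d (A \<inter> B)"
proof -
  have inter: "insert x A \<inter> B = A \<inter> B" "A \<inter> insert x B = A \<inter> B"
    using x A B by auto
  have subsets: "A \<subseteq> insert x M" "B \<subseteq> insert x M" "A \<union> B \<subseteq> insert x M" "A \<inter> B \<subseteq> insert x M"
    "insert x A \<subseteq> insert x M" "insert x B \<subseteq> insert x M"
    "insert x (A \<union> B) \<subseteq> insert x M" "insert x (A \<inter> B) \<subseteq> insert x M"
    using A B by auto
  have "(a A + a (insert x A)) * (b B + b (insert x B))
      \<le> (c (A \<union> B) + c (insert x (A \<union> B))) * (d (A \<inter> B) + d (insert x (A \<inter> B)))"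
  proof (rule four_numbers)
    show "a A * b B \<le> c (A \<union> B) * d (A \<inter> B)"
      using hyp[of A B] A B by auto
    show "a A * b (insert x B) \<le> c (insert x (A \<union> B)) * d (A \<inter> B)"
      using hyp[of A "insert x B"] A B inter by auto
    show "a (insert x A) * b B \<le> c (insert x (A \<union> B)) * d (A \<inter> B)"
      using hyp[of "insert x A" B] A B inter by auto
    show "a (insert x A) * b (insert x B) \<le> c (insert x (A \<union> B)) * d (insert x (A \<inter> B))"
      using hyp[of "insert x A" "insert x B"] A B by auto
  qed (use subsets in \<open>simp_all add: nonneg\<close>)
  then show ?thesis by (simp add: marginal_def)
qed

text \<open>The four functions theorem of Ahlswede and Daykin, by induction on the ground set:
  summing out one point at a time preserves the hypothesis.\<close>
theorem four_functions:
  fixes a b c d :: "'a set \<Rightarrow> real"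
  assumes "finite M"
    and "\<And>A. A \<subseteq> M \<Longrightarrow> a A \<ge> 0 \<and> b A \<ge> 0 \<and> c A \<ge> 0 \<and> d A \<ge> 0"
    and "\<And>A B. A \<subseteq> M \<Longrightarrow> B \<subseteq> M \<Longrightarrow> a A * b B \<le> c (A \<union> B) * d (A \<inter> B)"
  shows "(\<Sum>A\<in>Pow M. a A) * (\<Sum>A\<in>Pow M. b A) \<le> (\<Sum>A\<in>Pow M. c A) * (\<Sum>A\<in>Pow M. d A)"
  using assms
proof (induction M arbitrary: a b c d rule: finite_induct)
  case empty
  then show ?case by simp
next
  case (insert x M)
  have "(\<Sum>A\<in>Pow M. marginal x a A) * (\<Sum>A\<in>Pow M. marginal x b A)
      \<le> (\<Sum>A\<in>Pow M. marginal x c A) * (\<Sum>A\<in>Pow M. marginal x d A)"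
  proof (rule insert.IH)
    fix A assume "A \<subseteq> M"
    then have "insert x A \<subseteq> insert x M" "A \<subseteq> insert x M" by auto
    then show "marginal x a A \<ge> 0 \<and> marginal x b A \<ge> 0 \<and> marginal x c A \<ge> 0 \<and> marginal x d A \<ge> 0"
      using insert.prems(1) by (simp add: marginal_def)
  next
    fix A B assume "A \<subseteq> M" "B \<subseteq> M"
    then show "marginal x a A * marginal x b B \<le> marginal x c (A \<union> B) * marginal x d (A \<inter> B)"
      by (rule marginal_four_functions_condition[OF insert.hyps(2) _ _ insert.prems])
  qed
  then show ?case
    by (simp add: sum_Pow_insert_marginal[OF insert.hyps])
qed

section \<open>The fibres of union and intersection\<close>

lemma sum_Pow_complement:
  "(\<Sum>U\<in>Pow M. f (M - U)) = (\<Sum>U\<in>Pow M. f U)"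
proof -
  have "bij_betw (\<lambda>U. M - U) (Pow M) (Pow M)"
    by (rule bij_betw_byWitness[where f'="\<lambda>U. M - U"]) auto
  then show ?thesis by (rule sum.reindex_bij_betw)
qed

lemma sum_fibre_param:
  assumes "T \<subseteq> S"
  shows "(\<Sum>(A, B)\<in>{(A, B). A \<union> B = S \<and> A \<inter> B = T}. f A B)
       = (\<Sum>U\<in>Pow (S - T). f (T \<union> U) (S - U))"
proof -
  define e where "e U = (T \<union> U, S - U)" for U
  have fibre: "{(A, B). A \<union> B = S \<and> A \<inter> B = T} = e ` Pow (S - T)"
  proof (intro equalityI subsetI)
    fix z assume "z \<in> {(A, B). A \<union> B = S \<and> A \<inter> B = T}"
    then obtain A B where z: "z = (A, B)" "A \<union> B = S" "A \<inter> B = T" by blast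
    then have "z = e (A - B)" "A - B \<in> Pow (S - T)" by (auto simp: e_def)
    then show "z \<in> e ` Pow (S - T)" by blast
  qed (use assms in \<open>auto simp: e_def\<close>)
  have inj: "inj_on e (Pow (S - T))"
    by (auto simp: inj_on_def e_def)
  show ?thesis
    unfolding fibre sum.reindex[OF inj] by (simp add: e_def)
qed

text \<open>The hypothesis, applied once to the pair (T u U, T u W) and once to the pair of
  complements (S - W, S - U), gives a four functions condition for the parametrised
  fibre.\<close>
lemma fibre_condition:
  fixes \<alpha> \<beta> \<gamma> \<delta> :: "'a set \<Rightarrow> real"
  assumes TS: "T \<subseteq> S" and U: "U \<subseteq> S" and W: "W \<subseteq> S"
    and nonneg: "\<And>A. A \<subseteq> S \<Longrightarrow> \<alpha> A \<ge> 0 \<and> \<beta> A \<ge> 0 \<and> \<gamma> A \<ge> 0 \<and> \<delta> A \<ge> 0"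
    and hyp: "\<And>A B. A \<subseteq> S \<Longrightarrow> B \<subseteq> S \<Longrightarrow> \<alpha> A * \<beta> B \<le> \<gamma> (A \<union> B) * \<delta> (A \<inter> B)"
  shows "(\<alpha> (T \<union> U) * \<beta> (S - U)) * (\<alpha> (S - W) * \<beta> (T \<union> W))
       \<le> (\<gamma> (T \<union> (U \<union> W)) * \<delta> (S - (U \<union> W))) * (\<gamma> (S - (U \<inter> W)) * \<delta> (T \<union> (U \<inter> W)))"
proof -
  have subsets: "T \<union> U \<subseteq> S" "T \<union> W \<subseteq> S" "T \<union> (U \<union> W) \<subseteq> S" "T \<union> (U \<inter> W) \<subseteq> S"
    using TS U W by auto
  have lower: "\<alpha> (T \<union> U) * \<beta> (T \<union> W) \<le> \<gamma> (T \<union> (U \<union> W)) * \<delta> (T \<union> (U \<inter> W))"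
    using hyp[OF subsets(1,2)] by (simp add: Un_Int_distrib sup_assoc sup_left_commute)
  have upper: "\<alpha> (S - W) * \<beta> (S - U) \<le> \<gamma> (S - (U \<inter> W)) * \<delta> (S - (U \<union> W))"
    using hyp[of "S - W" "S - U"] by (simp add: Diff_Int Diff_Un Un_commute Int_commute)
  have "(\<alpha> (T \<union> U) * \<beta> (T \<union> W)) * (\<alpha> (S - W) * \<beta> (S - U))
      \<le> (\<gamma> (T \<union> (U \<union> W)) * \<delta> (T \<union> (U \<inter> W))) * (\<gamma> (S - (U \<inter> W)) * \<delta> (S - (U \<union> W)))"
    by (rule mult_mono[OF lower upper]) (use subsets in \<open>simp_all add: nonneg Diff_subset\<close>)
  then show ?thesis by (simp add: algebra_simps)
qed

text \<open>Parametrising the fibre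
  by U in Pow (S - T), the two sums are the square roots of the two sides of a four
  functions inequality on Pow (S - T), thanks to complement symmetry.\<close>
lemma fibre_le:
  fixes \<alpha> \<beta> \<gamma> \<delta> :: "'a set \<Rightarrow> real"
  assumes fin: "finite N" and SN: "S \<subseteq> N"
    and nonneg: "\<And>A. A \<subseteq> N \<Longrightarrow> \<alpha> A \<ge> 0 \<and> \<beta> A \<ge> 0 \<and> \<gamma> A \<ge> 0 \<and> \<delta> A \<ge> 0"
    and hyp: "\<And>A B. A \<subseteq> N \<Longrightarrow> B \<subseteq> N \<Longrightarrow> \<alpha> A * \<beta> B \<le> \<gamma> (A \<union> B) * \<delta> (A \<inter> B)"
  shows "(\<Sum>(A, B)\<in>{(A, B). A \<union> B = S \<and> A \<inter> B = T}. \<alpha> A * \<beta> B)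
       \<le> (\<Sum>(A, B)\<in>{(A, B). A \<union> B = S \<and> A \<inter> B = T}. \<gamma> A * \<delta> B)"
proof (cases "T \<subseteq> S")
  case False
  then have empty: "{(A, B). A \<union> B = S \<and> A \<inter> B = T} = {}" by auto
  show ?thesis unfolding empty by simp
next
  case TS: True
  define M where "M = S - T"
  define p where "p U = \<alpha> (T \<union> U) * \<beta> (S - U)" for U
  define r where "r U = \<gamma> (T \<union> U) * \<delta> (S - U)" for U
  have nonneg_S: "\<alpha> A \<ge> 0 \<and> \<beta> A \<ge> 0 \<and> \<gamma> A \<ge> 0 \<and> \<delta> A \<ge> 0" if "A \<subseteq> S" for A
    using that SN by (intro nonneg) blast
  have hyp_S: "\<alpha> A * \<beta> B \<le> \<gamma> (A \<union> B) * \<delta> (A \<inter> B)" if "A \<subseteq> S" "B \<subseteq> S" for A B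
    using that SN by (intro hyp) blast+
  have compl: "T \<union> (M - U) = S - U" "S - (M - U) = T \<union> U" if "U \<subseteq> M" for U
    using that TS by (auto simp: M_def)
  have in_S: "U \<subseteq> S" "T \<union> U \<subseteq> S" "S - U \<subseteq> S" if "U \<subseteq> M" for U
    using that TS by (auto simp: M_def)
  have p_nonneg: "p U \<ge> 0" and r_nonneg: "r U \<ge> 0" if "U \<subseteq> M" for U
    using nonneg_S in_S[OF that] by (simp_all add: p_def r_def)
  have "(\<Sum>U\<in>Pow M. p U) * (\<Sum>U\<in>Pow M. p (M - U)) \<le> (\<Sum>U\<in>Pow M. r U) * (\<Sum>U\<in>Pow M. r (M - U))"
  proof (rule four_functions)
    show "finite M" using finite_subset[OF SN fin] by (simp add: M_def)
  next
    fix U assume "U \<subseteq> M"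
    moreover have "M - U \<subseteq> M" by auto
    ultimately show "p U \<ge> 0 \<and> p (M - U) \<ge> 0 \<and> r U \<ge> 0 \<and> r (M - U) \<ge> 0"
      using p_nonneg r_nonneg by simp
  next
    fix U W assume U: "U \<subseteq> M" and W: "W \<subseteq> M"
    then have "U \<inter> W \<subseteq> M" by auto
    then show "p U * p (M - W) \<le> r (U \<union> W) * r (M - (U \<inter> W))"
      using fibre_condition[OF TS in_S(1)[OF U] in_S(1)[OF W] nonneg_S hyp_S] compl W
      by (simp add: p_def r_def)
  qed
  then have "(\<Sum>U\<in>Pow M. p U)\<^sup>2 \<le> (\<Sum>U\<in>Pow M. r U)\<^sup>2"
    by (simp add: sum_Pow_complement power2_eq_square)
  then have "(\<Sum>U\<in>Pow M. p U) \<le> (\<Sum>U\<in>Pow M. r U)"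
    by (rule power2_le_imp_le) (rule sum_nonneg, simp add: r_nonneg)
  then show ?thesis
    by (simp add: sum_fibre_param[OF TS] M_def p_def r_def)
qed

section \<open>Comparison of the coefficients\<close>

text \<open>Summed over all pairs with |A| + |B| = k: since |A| + |B| = |A u B| + |A n B|, the
  pairs of total size k are the union of the fibres over (S, T) with |S| + |T| = k.\<close>
lemma size_sum_le:
  fixes \<alpha> \<beta> \<gamma> \<delta> :: "'a set \<Rightarrow> real"
  assumes fin: "finite N"
    and nonneg: "\<And>A. A \<subseteq> N \<Longrightarrow> \<alpha> A \<ge> 0 \<and> \<beta> A \<ge> 0 \<and> \<gamma> A \<ge> 0 \<and> \<delta> A \<ge> 0"
    and hyp: "\<And>A B. A \<subseteq> N \<Longrightarrow> B \<subseteq> N \<Longrightarrow> \<alpha> A * \<beta> B \<le> \<gamma> (A \<union> B) * \<delta> (A \<inter> B)"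
  shows "(\<Sum>(A, B)\<in>{(A, B) \<in> Pow N \<times> Pow N. card A + card B = k}. \<alpha> A * \<beta> B)
       \<le> (\<Sum>(A, B)\<in>{(A, B) \<in> Pow N \<times> Pow N. card A + card B = k}. \<gamma> A * \<delta> B)"
proof -
  define P where "P = Pow N \<times> Pow N"
  define Pk where "Pk = {(A, B) \<in> P. card A + card B = k}"
  define g where "g = (\<lambda>(A, B). (A \<union> B, A \<inter> B :: 'a set))"
  define fibre where "fibre S T = {(A, B). A \<union> B = S \<and> A \<inter> B = (T :: 'a set)}" for S T
  have finite_Pk_P: "finite Pk" "finite P"
    using fin by (auto simp: P_def Pk_def intro: finite_subset[of _ P])
  have g_Pk: "g ` Pk \<subseteq> P" by (auto simp: g_def Pk_def P_def)
  have Pk_fibre: "{z \<in> Pk. g z = (S, T)} = (if card S + card T = k then fibre S T else {})"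
    if "(S, T) \<in> P" for S T
  proof -
    have "card A + card B = card S + card T" if "A \<union> B = S" "A \<inter> B = T" for A B
      using that \<open>(S, T) \<in> P\<close> fin card_Un_Int[of A B]
      by (auto simp: P_def intro: finite_subset)
    then show ?thesis
      using that by (auto simp: Pk_def P_def g_def fibre_def)
  qed
  have fibre_part_le: "(\<Sum>(A, B)\<in>{z \<in> Pk. g z = (S, T)}. \<alpha> A * \<beta> B)
      \<le> (\<Sum>(A, B)\<in>{z \<in> Pk. g z = (S, T)}. \<gamma> A * \<delta> B)" if ST: "(S, T) \<in> P" for S T
    using fibre_le[OF fin _ nonneg hyp, of S T] ST by (simp add: Pk_fibre P_def fibre_def)
  have "(\<Sum>(A, B)\<in>Pk. \<alpha> A * \<beta> B) = (\<Sum>ST\<in>P. \<Sum>(A, B)\<in>{z \<in> Pk. g z = ST}. \<alpha> A * \<beta> B)"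
    by (rule sum.group[OF finite_Pk_P g_Pk, symmetric])
  also have "\<dots> \<le> (\<Sum>ST\<in>P. \<Sum>(A, B)\<in>{z \<in> Pk. g z = ST}. \<gamma> A * \<delta> B)"
    by (rule sum_mono) (use fibre_part_le in auto)
  also have "\<dots> = (\<Sum>(A, B)\<in>Pk. \<gamma> A * \<delta> B)"
    by (rule sum.group[OF finite_Pk_P g_Pk])
  finally show ?thesis by (simp add: Pk_def P_def)
qed

lemma coeff_set_gen_poly_mult:
  "coeff (set_gen_poly n f * set_gen_poly n g) k
     = (\<Sum>(A, B)\<in>{(A, B) \<in> Pow {1..n} \<times> Pow {1..n}. card A + card B = k}. f A * g B)"
proof -
  have "coeff (set_gen_poly n f * set_gen_poly n g) k
      = (\<Sum>(A, B)\<in>Pow {1..n} \<times> Pow {1..n}. if card A + card B = k then f A * g B else 0)"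
    unfolding set_gen_poly_def sum_product
    by (simp add: mult_monom coeff_sum sum.cartesian_product case_prod_unfold)
  also have "\<dots> = (\<Sum>x\<in>{x \<in> Pow {1..n} \<times> Pow {1..n}. card (fst x) + card (snd x) = k}. f (fst x) * g (snd x))"
    by (simp add: sum.inter_filter case_prod_unfold)
  also have "\<dots> = (\<Sum>(A, B)\<in>{(A, B) \<in> Pow {1..n} \<times> Pow {1..n}. card A + card B = k}. f A * g B)"
    by (intro sum.cong) (auto simp: case_prod_unfold)
  finally show ?thesis .
qed

theorem theorem2p1:
  fixes n :: nat and \<alpha> \<beta> \<gamma> \<delta> :: "nat set \<Rightarrow> real"
  assumes "n > 0"
    and "\<And>A. A \<subseteq> {1..n} \<Longrightarrow> \<alpha> A \<ge> 0"
    and "\<And>A. A \<subseteq> {1..n} \<Longrightarrow> \<beta> A \<ge> 0"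
    and "\<And>A. A \<subseteq> {1..n} \<Longrightarrow> \<gamma> A \<ge> 0"
    and "\<And>A. A \<subseteq> {1..n} \<Longrightarrow> \<delta> A \<ge> 0"
    and "\<And>A B. A \<subseteq> {1..n} \<Longrightarrow> B \<subseteq> {1..n} \<Longrightarrow>
           \<alpha> A * \<beta> B \<le> \<gamma> (A \<union> B) * \<delta> (A \<inter> B)"
  shows "set_gen_poly n \<alpha> * set_gen_poly n \<beta> \<lless> set_gen_poly n \<gamma> * set_gen_poly n \<delta>"
  unfolding coeff_le_def
proof
  fix k
  have "coeff (set_gen_poly n \<alpha> * set_gen_poly n \<beta>) k \<le> coeff (set_gen_poly n \<gamma> * set_gen_poly n \<delta>) k"
    unfolding coeff_set_gen_poly_mult by (rule size_sum_le) (use assms in auto)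
  then show "0 \<le> coeff (set_gen_poly n \<gamma> * set_gen_poly n \<delta> - set_gen_poly n \<alpha> * set_gen_poly n \<beta>) k"
    by simp
qed

end
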